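(* Let $n=2^m$ with $m\ge1$, let $\rho_{\text{in}}$ be an $n$-qubit density matrix, and let $f_{\text{TT}}$ be the objective function of the $n$-qubit TT-QNN. Then $$\mathbb{E}_{\boldsymbol\theta}\Big(f_{\text{TT}}-\frac12\Big)^2\ge\frac{\text{Tr}[(\sigma_1\otimes I^{\otimes(n-1)})\rho_{\text{in}}]^2+\text{Tr}[(\sigma_3\otimes I^{\otimes(n-1)})\rho_{\text{in}}]^2}{8n},$$ where the expectation is over all parameters drawn independently and uniformly from $[0,2\pi]$.
   Context: Pauli matrices $\sigma_0=I,\sigma_1=X,\sigma_2=Y,\sigma_3=Z$; qubits numbered $1,\dots,n$. A rotation with parameter $\theta$ on qubit $q$ is $e^{-i\theta\sigma_2}$ on qubit $q$. A CNOT with control $c$ and target $t$ is $|0\rangle\langle0|_c\otimes I_t+|1\rangle\langle1|_c\otimes(\sigma_1)_t$. TT-QNN: $V_{\text{TT}}=V_{m+1}CX_mV_m\cdots CX_1V_1$, where for $\ell=1,\dots,m+1$, $V_\ell$ is the tensor product of rotations with independent parameters on qubits $(j-1)2^{\ell-1}+1$, $j=1,\dots,n2^{1-\ell}$; for $\ell=1,\dots,m$, $CX_\ell$ is the product of CNOTs with control qubit $(j-\frac12)2^\ell+1$ and target $(j-1)2^\ell+1$, $j=1,\dots,n2^{-\ell}$. $f_{\text{TT}}(\boldsymbol\theta)=\frac12+\frac12\text{Tr}[(\sigma_3\otimes I^{\otimes(n-1)})V_{\text{TT}}(\boldsymbol\theta)\rho_{\text{in}}V_{\text{TT}}(\boldsymbol\theta)^\dagger]$.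 *)

theory Defs
  imports "Jordan_Normal_Form.Schur_Decomposition" "HOL-Probability.Probability"
begin

text \<open>Computational basis index i < 2^n; qubit q (1..n) is the q-th tensor factor
  from the left, i.e. the bit of weight 2^(n-q).\<close>
definition qbit :: "nat \<Rightarrow> nat \<Rightarrow> nat \<Rightarrow> nat" where
  "qbit n q i = (i div 2 ^ (n - q)) mod 2"

definition pauli :: "nat \<Rightarrow> complex mat" where
  "pauli k = (if k = 0 then mat_of_rows_list 2 [[1, 0], [0, 1]]
    else if k = 1 then mat_of_rows_list 2 [[0, 1], [1, 0]]
    else if k = 2 then mat_of_rows_list 2 [[0, -\<i>], [\<i>, 0]]
    else mat_of_rows_list 2 [[1, 0], [0, -1]])"

text \<open>The operator U (a 2x2 matrix) acting on qubit q, tensored with identities elsewhere.\<close>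
definition on_qubit :: "nat \<Rightarrow> nat \<Rightarrow> complex mat \<Rightarrow> complex mat" where
  "on_qubit n q U = Matrix.mat (2 ^ n) (2 ^ n) (\<lambda>(i, j).
     if (\<forall>p \<in> {1..n} - {q}. qbit n p i = qbit n p j) then U $$ (qbit n q i, qbit n q j) else 0)"

text \<open>Rotation e^{-i theta sigma_2} = cos theta I - i sin theta sigma_2 (as sigma_2^2 = I).\<close>
definition rot :: "real \<Rightarrow> complex mat" where
  "rot \<theta> = complex_of_real (cos \<theta>) \<cdot>\<^sub>m pauli 0 - (\<i> * complex_of_real (sin \<theta>)) \<cdot>\<^sub>m pauli 2"

definition proj0 :: "complex mat" where "proj0 = mat_of_rows_list 2 [[1, 0], [0, 0]]"
definition proj1 :: "complex mat" where "proj1 = mat_of_rows_list 2 [[0, 0], [0, 1]]"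

definition cnot :: "nat \<Rightarrow> nat \<Rightarrow> nat \<Rightarrow> complex mat" where
  "cnot n c t = on_qubit n c proj0 + on_qubit n c proj1 * on_qubit n t (pauli 1)"

definition mat_prod_list :: "nat \<Rightarrow> complex mat list \<Rightarrow> complex mat" where
  "mat_prod_list d Us = foldr (*) Us (1\<^sub>m d)"

text \<open>Parameters are indexed by pairs (l, j): layer l, rotation j.\<close>
definition V_layer :: "nat \<Rightarrow> nat \<Rightarrow> (nat \<times> nat \<Rightarrow> real) \<Rightarrow> complex mat" where
  "V_layer n l \<theta> = mat_prod_list (2 ^ n)
     (map (\<lambda>j. on_qubit n ((j - 1) * 2 ^ (l - 1) + 1) (rot (\<theta> (l, j)))) [1..<n div 2 ^ (l - 1) + 1])"

definition CX_layer :: "nat \<Rightarrow> nat \<Rightarrow> complex mat" where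
  "CX_layer n l = mat_prod_list (2 ^ n)
     (map (\<lambda>j. cnot n ((2 * j - 1) * 2 ^ (l - 1) + 1) ((j - 1) * 2 ^ l + 1)) [1..<n div 2 ^ l + 1])"

fun TT_partial :: "nat \<Rightarrow> nat \<Rightarrow> (nat \<times> nat \<Rightarrow> real) \<Rightarrow> complex mat" where
  "TT_partial n 0 \<theta> = 1\<^sub>m (2 ^ n)"
| "TT_partial n (Suc 0) \<theta> = V_layer n 1 \<theta>"
| "TT_partial n (Suc (Suc k)) \<theta> = V_layer n (k + 2) \<theta> * CX_layer n (k + 1) * TT_partial n (Suc k) \<theta>"

definition V_TT :: "nat \<Rightarrow> nat \<Rightarrow> (nat \<times> nat \<Rightarrow> real) \<Rightarrow> complex mat" where
  "V_TT n m \<theta> = TT_partial n (m + 1) \<theta>"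

definition mat_trace :: "complex mat \<Rightarrow> complex" where
  "mat_trace A = (\<Sum>i < dim_row A. A $$ (i, i))"

definition f_TT :: "nat \<Rightarrow> nat \<Rightarrow> complex mat \<Rightarrow> (nat \<times> nat \<Rightarrow> real) \<Rightarrow> real" where
  "f_TT n m \<rho> \<theta> = 1/2 + 1/2 * Re (mat_trace (on_qubit n 1 (pauli 3) * V_TT n m \<theta> * \<rho> * mat_adjoint (V_TT n m \<theta>)))"

definition TT_params :: "nat \<Rightarrow> nat \<Rightarrow> (nat \<times> nat) set" where
  "TT_params n m = {(l, j). 1 \<le> l \<and> l \<le> m + 1 \<and> 1 \<le> j \<and> j \<le> n div 2 ^ (l - 1)}"

definition TT_param_measure :: "nat \<Rightarrow> nat \<Rightarrow> (nat \<times> nat \<Rightarrow> real) measure" where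
  "TT_param_measure n m = PiM (TT_params n m) (\<lambda>_. uniform_measure lborel {0..2 * pi})"

definition density_matrix :: "nat \<Rightarrow> complex mat \<Rightarrow> bool" where
  "density_matrix n \<rho> \<longleftrightarrow> \<rho> \<in> carrier_mat (2 ^ n) (2 ^ n) \<and> mat_adjoint \<rho> = \<rho> \<and>
     (\<forall>v \<in> carrier_vec (2 ^ n). 0 \<le> Re (conjugate v \<bullet> (\<rho> *\<^sub>v v))) \<and> mat_trace \<rho> = 1"

end

theory Submission
  imports Defs
begin

(* Work in the Heisenberg picture with the observables X and Z on qubit 1. In every rotation layer
   only the rotation on qubit 1 acts on them; it turns the pair (<X>, <Z>) of the incoming state by
   the angle 2t, and since its angle t is uniform and independent of that state, averaging over t
   halves the second moment E(<X>^2 + <Z>^2), leaving E<X>^2 = E<Z>^2 = half of it. Every CNOT has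
   its control outside qubit 1 and so commutes with X on qubit 1: a CNOT layer may destroy <Z> but
   keeps <X>, so the second moment of the state entering layer V_(k+1) is at least
   2^-k (<X>_rho^2 + <Z>_rho^2). After the last layer E<Z>^2 is half the moment entering it, and
   f_TT - 1/2 = <Z>/2 gives the bound with 8 n = 4 * 2^(m+1). *)

text \<open>Keep the numeral \<open>1\<close> (qubit 1, \<open>pauli 1\<close>) from being rewritten to \<open>Suc 0\<close>.\<close>
declare One_nat_def [simp del]

section \<open>Matrix algebra\<close>

lemma mat_adjoint_altdef:
  "mat_adjoint A = Matrix.mat (dim_col A) (dim_row A) (\<lambda>(i, j). conjugate (A $$ (j, i)))"
  unfolding mat_adjoint_def by (rule eq_matI) (auto simp: mat_of_rows_index)

lemma mat_adjoint_dim [simp]: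
  "dim_row (mat_adjoint A) = dim_col A" "dim_col (mat_adjoint A) = dim_row A"
  by (auto simp: mat_adjoint_altdef)

lemma mat_adjoint_index [simp]:
  "i < dim_col A \<Longrightarrow> j < dim_row A \<Longrightarrow> mat_adjoint A $$ (i, j) = conjugate (A $$ (j, i))"
  by (auto simp: mat_adjoint_altdef)

lemma mat_adjoint_carrier [simp]: "A \<in> carrier_mat n m \<Longrightarrow> mat_adjoint A \<in> carrier_mat m n"
  by auto

lemma mat_adjoint_mult:
  fixes A B :: "complex mat"
  assumes "A \<in> carrier_mat a b" "B \<in> carrier_mat b c"
  shows "mat_adjoint (A * B) = mat_adjoint B * mat_adjoint A"
  using assms by (intro eq_matI) (auto simp: scalar_prod_def mult.commute cnj_sum intro!: sum.cong)

lemma mat_adjoint_add: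
  fixes A B :: "complex mat"
  assumes "A \<in> carrier_mat a b" "B \<in> carrier_mat a b"
  shows "mat_adjoint (A + B) = mat_adjoint A + mat_adjoint B"
  using assms by (intro eq_matI) auto

lemma mat_adjoint_one [simp]: "mat_adjoint (1\<^sub>m d :: complex mat) = 1\<^sub>m d"
  by (rule eq_matI) auto

lemma mult_carrier_mat_square [simp]:
  "A \<in> carrier_mat d d \<Longrightarrow> B \<in> carrier_mat d d \<Longrightarrow> A * B \<in> carrier_mat d d"
  by (rule mult_carrier_mat)

lemma mat_trace_mult_commute:
  assumes "A \<in> carrier_mat d e" "B \<in> carrier_mat e d"
  shows "mat_trace (A * B) = mat_trace (B * A)"
proof -
  have "mat_trace (A * B) = (\<Sum>i<d. \<Sum>k<e. A $$ (i, k) * B $$ (k, i))"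
    using assms by (auto simp: mat_trace_def scalar_prod_def lessThan_atLeast0 intro!: sum.cong)
  also have "\<dots> = (\<Sum>k<e. \<Sum>i<d. B $$ (k, i) * A $$ (i, k))"
    by (subst sum.swap) (simp add: mult.commute)
  also have "\<dots> = mat_trace (B * A)"
    using assms by (auto simp: mat_trace_def scalar_prod_def lessThan_atLeast0 intro!: sum.cong)
  finally show ?thesis .
qed

lemma mat_trace_add:
  "A \<in> carrier_mat d d \<Longrightarrow> B \<in> carrier_mat d d \<Longrightarrow> mat_trace (A + B) = mat_trace A + mat_trace B"
  by (auto simp: mat_trace_def sum.distrib)

lemma mat_trace_smult: "A \<in> carrier_mat d d \<Longrightarrow> mat_trace (c \<cdot>\<^sub>m A) = c * mat_trace A"
  by (auto simp: mat_trace_def sum_distrib_left)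

lemma mat_trace_mult_conj:
  assumes A: "A \<in> carrier_mat d d" and T: "T \<in> carrier_mat d d" and U: "U \<in> carrier_mat d d"
  shows "mat_trace (A * (U * T * mat_adjoint U)) = mat_trace (mat_adjoint U * A * U * T)"
proof -
  note assoc = assoc_mult_mat[of _ d d _ d _ d]
  have "mat_trace (A * (U * T * mat_adjoint U)) = mat_trace ((A * U * T) * mat_adjoint U)"
    using A T U by (simp add: assoc)
  also have "\<dots> = mat_trace (mat_adjoint U * (A * U * T))"
    using A T U by (intro mat_trace_mult_commute) auto
  also have "\<dots> = mat_trace (mat_adjoint U * A * U * T)"
    using A T U by (simp add: assoc)
  finally show ?thesis .
qed

definition unitary :: "nat \<Rightarrow> complex mat \<Rightarrow> bool" where
  "unitary d U \<longleftrightarrow> U \<in> carrier_mat d d \<and> mat_adjoint U * U = 1\<^sub>m d"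

lemma unitary_one: "unitary d (1\<^sub>m d)"
  by (simp add: unitary_def)

lemma unitary_mult:
  assumes "unitary d U" "unitary d V"
  shows "unitary d (U * V)"
proof -
  note assoc = assoc_mult_mat[of _ d d _ d _ d]
  have U: "U \<in> carrier_mat d d" and V: "V \<in> carrier_mat d d"
    using assms by (auto simp: unitary_def)
  have "mat_adjoint (U * V) * (U * V) = mat_adjoint V * (mat_adjoint U * U) * V"
    using U V mat_adjoint_carrier[OF U] mat_adjoint_carrier[OF V] by (simp add: mat_adjoint_mult[OF U V] assoc)
  also have "\<dots> = 1\<^sub>m d"
    using assms V by (simp add: unitary_def)
  finally show ?thesis
    using U V by (simp add: unitary_def)
qed

lemma mat_trace_conj_commuting_unitary:
  assumes P: "P \<in> carrier_mat d d" and T: "T \<in> carrier_mat d d"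
    and U: "unitary d U" and commute: "U * P = P * U"
  shows "mat_trace (P * (U * T * mat_adjoint U)) = mat_trace (P * T)"
proof -
  note assoc = assoc_mult_mat[of _ d d _ d _ d]
  have Uc: "U \<in> carrier_mat d d" and UU: "mat_adjoint U * U = 1\<^sub>m d"
    using U by (auto simp: unitary_def)
  have "mat_adjoint U * P * U = mat_adjoint U * (U * P)"
    using P Uc by (simp add: assoc commute)
  also have "\<dots> = P"
    using P Uc UU by (simp add: assoc[symmetric])
  finally show ?thesis
    using mat_trace_mult_conj[OF P T Uc] by simp
qed

lemma mat_prod_list_Cons: "mat_prod_list d (U # Us) = U * mat_prod_list d Us"
  by (simp add: mat_prod_list_def)

lemma mat_prod_list_carrier:
  "\<forall>U \<in> set Us. U \<in> carrier_mat d d \<Longrightarrow> mat_prod_list d Us \<in> carrier_mat d d"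
  by (induction Us) (auto simp: mat_prod_list_def)

lemma unitary_mat_prod_list:
  "(\<And>U. U \<in> set Us \<Longrightarrow> unitary d U) \<Longrightarrow> unitary d (mat_prod_list d Us)"
  by (induction Us) (auto simp: mat_prod_list_def unitary_one unitary_mult)

lemma mat_prod_list_commute:
  assumes M: "M \<in> carrier_mat d d"
    and Us: "\<And>U. U \<in> set Us \<Longrightarrow> U \<in> carrier_mat d d \<and> U * M = M * U"
  shows "mat_prod_list d Us * M = M * mat_prod_list d Us"
  using Us
proof (induction Us)
  case Nil
  then show ?case using M by (simp add: mat_prod_list_def)
next
  case (Cons U Us)
  note assoc = assoc_mult_mat[of _ d d _ d _ d]
  have U: "U \<in> carrier_mat d d" and UM: "U * M = M * U" and P: "mat_prod_list d Us \<in> carrier_mat d d"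
    using Cons.prems by (auto intro: mat_prod_list_carrier)
  have "mat_prod_list d (U # Us) * M = U * (mat_prod_list d Us * M)"
    using U P M by (simp add: mat_prod_list_Cons assoc)
  also have "\<dots> = U * (M * mat_prod_list d Us)"
    using Cons by simp
  also have "\<dots> = (U * M) * mat_prod_list d Us"
    using U P M by (simp add: assoc)
  also have "\<dots> = M * mat_prod_list d (U # Us)"
    using U P M by (simp add: UM mat_prod_list_Cons assoc)
  finally show ?case .
qed

section \<open>Operators on a single qubit\<close>

lemma qbit_eq_bit: "qbit n p i = of_bool (bit i (n - p))"
  unfolding qbit_def by (simp add: bit_iff_odd odd_iff_mod_2_eq_one)

lemma qbit_less_2: "qbit n p i < 2"
  unfolding qbit_def by simp

lemma not_bit_if_less_two_pow: "(i::nat) < 2 ^ n \<Longrightarrow> n \<le> r \<Longrightarrow> \<not> bit i r"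
  by (metis bit_take_bit_iff linorder_not_le take_bit_nat_eq_self_iff)

lemma eq_if_qbit_eq:
  assumes "(i::nat) < 2 ^ n" "j < 2 ^ n" "\<And>p. 1 \<le> p \<Longrightarrow> p \<le> n \<Longrightarrow> qbit n p i = qbit n p j"
  shows "i = j"
proof (rule bit_eqI)
  fix r
  show "bit i r = bit j r"
  proof (cases "r < n")
    case True
    then have "qbit n (n - r) i = qbit n (n - r) j" using assms(3) by auto
    then show ?thesis using True by (cases "bit i r"; cases "bit j r") (auto simp: qbit_eq_bit)
  next
    case False
    then show ?thesis using not_bit_if_less_two_pow assms(1,2) by auto
  qed
qed

definition set_qbit :: "nat \<Rightarrow> nat \<Rightarrow> nat \<Rightarrow> nat \<Rightarrow> nat" where
  "set_qbit n q b i = (if b = 0 then unset_bit (n - q) i else set_bit (n - q) i)"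

lemma bit_set_qbit: "bit (set_qbit n q b i) r = (if r = n - q then b \<noteq> 0 else bit i r)"
  unfolding set_qbit_def by (auto simp: bit_set_bit_iff bit_unset_bit_iff)

lemma qbit_set_qbit:
  assumes "1 \<le> p" "p \<le> n" "1 \<le> q" "q \<le> n" "b < 2"
  shows "qbit n p (set_qbit n q b i) = (if p = q then b else qbit n p i)"
  using assms by (auto simp: qbit_eq_bit bit_set_qbit)

lemma set_qbit_less:
  assumes "1 \<le> q" "q \<le> n" "i < 2 ^ n"
  shows "set_qbit n q b i < 2 ^ n"
proof -
  have "take_bit n (set_qbit n q b i) = set_qbit n q b i"
  proof (rule bit_eqI)
    fix r
    show "bit (take_bit n (set_qbit n q b i)) r = bit (set_qbit n q b i) r"
      using assms not_bit_if_less_two_pow[OF assms(3), of r]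
      by (cases "r < n") (auto simp: bit_take_bit_iff bit_set_qbit)
  qed
  then show ?thesis by (metis take_bit_nat_eq_self_iff)
qed

text \<open>The sparsity pattern of an operator acting only on the qubits in \<open>Q\<close>.\<close>
definition agree_off :: "nat \<Rightarrow> nat set \<Rightarrow> nat \<Rightarrow> nat \<Rightarrow> bool" where
  "agree_off n Q i j \<longleftrightarrow> (\<forall>p \<in> {1..n} - Q. qbit n p i = qbit n p j)"

lemma agree_off_sym: "agree_off n Q i j = agree_off n Q j i"
  unfolding agree_off_def by auto

lemma agree_off_set_qbit:
  assumes "1 \<le> p" "p \<le> n" "b < 2"
  shows "agree_off n Q (set_qbit n p b i) k \<longleftrightarrow>
    (if p \<in> Q then agree_off n Q i k else b = qbit n p k \<and> agree_off n (insert p Q) i k)"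
  using assms unfolding agree_off_def by (auto simp: qbit_set_qbit)

lemma agree_off_singleton_set:
  assumes q: "1 \<le> q" "q \<le> n" and i: "i < 2 ^ n"
  shows "{j \<in> {..<2 ^ n}. agree_off n {q} i j} = {set_qbit n q 0 i, set_qbit n q 1 i}"
proof -
  have "j = set_qbit n q (qbit n q j) i" if "j < 2 ^ n" "agree_off n {q} i j" for j
    by (rule eq_if_qbit_eq[OF that(1) set_qbit_less[OF q i]])
      (use that q in \<open>auto simp: qbit_set_qbit qbit_less_2 agree_off_def\<close>)
  moreover have "qbit n q j = 0 \<or> qbit n q j = 1" for j
    using qbit_less_2[of n q j] by linarith
  ultimately have "j = set_qbit n q 0 i \<or> j = set_qbit n q 1 i" if "j < 2 ^ n" "agree_off n {q} i j" for j
    using that by metis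
  moreover have "agree_off n {q} i (set_qbit n q b i)" if "b < 2" for b
    using q that by (auto simp: agree_off_def qbit_set_qbit)
  ultimately show ?thesis
    using set_qbit_less[OF q i] by auto
qed

lemma sum_agree_off_singleton:
  assumes q: "1 \<le> q" "q \<le> n" and i: "i < 2 ^ n"
  shows "(\<Sum>j<2 ^ n. if agree_off n {q} i j then g j else 0) = g (set_qbit n q 0 i) + g (set_qbit n q 1 i)"
proof -
  have "set_qbit n q 0 i \<noteq> set_qbit n q 1 i"
    using qbit_set_qbit[OF q q, of 0 i] qbit_set_qbit[OF q q, of 1 i] by auto
  have "(\<Sum>j<2 ^ n. if agree_off n {q} i j then g j else 0) =
      sum g {j \<in> {..<2 ^ n}. agree_off n {q} i j}"
    by (rule sum.inter_filter[symmetric]) simp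
  also have "\<dots> = g (set_qbit n q 0 i) + g (set_qbit n q 1 i)"
    using agree_off_singleton_set[OF q i] \<open>set_qbit n q 0 i \<noteq> set_qbit n q 1 i\<close> by simp
  finally show ?thesis .
qed

lemma on_qubit_carrier [simp]:
  "dim_row (on_qubit n q U) = 2 ^ n" "dim_col (on_qubit n q U) = 2 ^ n"
  "on_qubit n q U \<in> carrier_mat (2 ^ n) (2 ^ n)"
  by (auto simp: on_qubit_def)

lemma on_qubit_index:
  "i < 2 ^ n \<Longrightarrow> j < 2 ^ n \<Longrightarrow>
    on_qubit n q U $$ (i, j) = (if agree_off n {q} i j then U $$ (qbit n q i, qbit n q j) else 0)"
  by (simp add: on_qubit_def agree_off_def)

lemma on_qubit_mult:
  assumes q: "1 \<le> q" "q \<le> n" and A: "A \<in> carrier_mat 2 2" and B: "B \<in> carrier_mat 2 2"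
  shows "on_qubit n q A * on_qubit n q B = on_qubit n q (A * B)"
proof (rule eq_matI)
  fix i k assume "i < dim_row (on_qubit n q (A * B))" "k < dim_col (on_qubit n q (A * B))"
  then have i: "i < 2 ^ n" and k: "k < 2 ^ n" by auto
  have "(on_qubit n q A * on_qubit n q B) $$ (i, k) =
     (\<Sum>j<2 ^ n. if agree_off n {q} i j then A $$ (qbit n q i, qbit n q j) * on_qubit n q B $$ (j, k) else 0)"
    using i k by (auto simp: scalar_prod_def on_qubit_index lessThan_atLeast0 intro!: sum.cong)
  also have "\<dots> = (\<Sum>b<2. A $$ (qbit n q i, b) * on_qubit n q B $$ (set_qbit n q b i, k))"
    by (subst sum_agree_off_singleton[OF q i]) (simp add: qbit_set_qbit[OF q q] numeral_2_eq_2 One_nat_def)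
  also have "\<dots> = (if agree_off n {q} i k then (\<Sum>b<2. A $$ (qbit n q i, b) * B $$ (b, qbit n q k)) else 0)"
    using q k set_qbit_less[OF q i]
    by (auto simp: on_qubit_index agree_off_set_qbit qbit_set_qbit numeral_2_eq_2)
  also have "\<dots> = on_qubit n q (A * B) $$ (i, k)"
    using i k A B qbit_less_2[of n q i] qbit_less_2[of n q k]
    by (auto simp: on_qubit_index scalar_prod_def lessThan_atLeast0)
  finally show "(on_qubit n q A * on_qubit n q B) $$ (i, k) = on_qubit n q (A * B) $$ (i, k)" .
qed auto

lemma on_qubit_mult_on_qubit_neq:
  assumes p: "1 \<le> p" "p \<le> n" and q: "1 \<le> q" "q \<le> n" and pq: "p \<noteq> q"
  shows "on_qubit n p A * on_qubit n q B = Matrix.mat (2 ^ n) (2 ^ n) (\<lambda>(i, k).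
     if agree_off n {p, q} i k then A $$ (qbit n p i, qbit n p k) * B $$ (qbit n q i, qbit n q k) else 0)"
    (is "_ = Matrix.mat _ _ ?E")
proof (rule eq_matI)
  fix i k assume "i < dim_row (Matrix.mat (2 ^ n) (2 ^ n) ?E)" "k < dim_col (Matrix.mat (2 ^ n) (2 ^ n) ?E)"
  then have i: "i < 2 ^ n" and k: "k < 2 ^ n" by auto
  have "(on_qubit n p A * on_qubit n q B) $$ (i, k) =
     (\<Sum>j<2 ^ n. if agree_off n {p} i j then A $$ (qbit n p i, qbit n p j) * on_qubit n q B $$ (j, k) else 0)"
    using i k by (auto simp: scalar_prod_def on_qubit_index lessThan_atLeast0 intro!: sum.cong)
  also have "\<dots> = (\<Sum>b<2. A $$ (qbit n p i, b) * on_qubit n q B $$ (set_qbit n p b i, k))"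
    by (subst sum_agree_off_singleton[OF p i]) (simp add: qbit_set_qbit[OF p p] numeral_2_eq_2 One_nat_def)
  also have "\<dots> = (\<Sum>b<2. if b = qbit n p k \<and> agree_off n {p, q} i k
      then A $$ (qbit n p i, b) * B $$ (qbit n q i, qbit n q k) else 0)"
    using p q pq k set_qbit_less[OF p i]
    by (auto simp: on_qubit_index agree_off_set_qbit qbit_set_qbit insert_commute intro!: sum.cong)
  also have "\<dots> = ?E (i, k)"
    using qbit_less_2[of n p k] by (auto simp: sum.delta')
  finally show "(on_qubit n p A * on_qubit n q B) $$ (i, k) = Matrix.mat (2 ^ n) (2 ^ n) ?E $$ (i, k)"
    using i k by simp
qed auto

lemma on_qubit_commute:
  assumes "1 \<le> p" "p \<le> n" "1 \<le> q" "q \<le> n" "p \<noteq> q"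
  shows "on_qubit n p A * on_qubit n q B = on_qubit n q B * on_qubit n p A"
  unfolding on_qubit_mult_on_qubit_neq[OF assms] on_qubit_mult_on_qubit_neq[OF assms(3,4,1,2) assms(5)[symmetric]]
  by (rule eq_matI) (auto simp: insert_commute)

lemma mat_adjoint_on_qubit:
  "A \<in> carrier_mat 2 2 \<Longrightarrow> mat_adjoint (on_qubit n q A) = on_qubit n q (mat_adjoint A)"
  by (rule eq_matI) (auto simp: on_qubit_index agree_off_sym qbit_less_2)

lemma on_qubit_one:
  assumes q: "1 \<le> q" "q \<le> n"
  shows "on_qubit n q (1\<^sub>m 2) = 1\<^sub>m (2 ^ n)"
proof (rule eq_matI)
  fix i j assume "i < dim_row (1\<^sub>m (2 ^ n) :: complex mat)" "j < dim_col (1\<^sub>m (2 ^ n) :: complex mat)"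
  then have i: "i < 2 ^ n" and j: "j < 2 ^ n" by auto
  have "agree_off n {q} i j \<and> qbit n q i = qbit n q j \<longleftrightarrow> i = j"
  proof
    assume "agree_off n {q} i j \<and> qbit n q i = qbit n q j"
    then show "i = j" by (intro eq_if_qbit_eq[OF i j]) (auto simp: agree_off_def)
  qed (auto simp: agree_off_def)
  then show "on_qubit n q (1\<^sub>m 2) $$ (i, j) = 1\<^sub>m (2 ^ n) $$ (i, j)"
    using i j qbit_less_2[of n q i] qbit_less_2[of n q j] by (auto simp: on_qubit_index)
qed auto

lemma on_qubit_zero: "on_qubit n q (0\<^sub>m 2 2) = 0\<^sub>m (2 ^ n) (2 ^ n)"
  by (rule eq_matI) (auto simp: on_qubit_index qbit_less_2)

lemma on_qubit_add:
  "A \<in> carrier_mat 2 2 \<Longrightarrow> B \<in> carrier_mat 2 2 \<Longrightarrow> on_qubit n q (A + B) = on_qubit n q A + on_qubit n q B"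
  by (intro eq_matI) (auto simp: on_qubit_index qbit_less_2)

lemma on_qubit_smult: "A \<in> carrier_mat 2 2 \<Longrightarrow> on_qubit n q (c \<cdot>\<^sub>m A) = c \<cdot>\<^sub>m on_qubit n q A"
  by (intro eq_matI) (auto simp: on_qubit_index qbit_less_2)

section \<open>Rotations and CNOT gates\<close>

definition mat2 :: "complex \<Rightarrow> complex \<Rightarrow> complex \<Rightarrow> complex \<Rightarrow> complex mat" where
  "mat2 a b c d = Matrix.mat 2 2 (\<lambda>(i, j). if i = 0 then (if j = 0 then a else b) else (if j = 0 then c else d))"

lemma mat2_carrier [simp]: "mat2 a b c d \<in> carrier_mat 2 2"
  by (simp add: mat2_def)

lemma mat_of_rows_list_mat2: "mat_of_rows_list 2 [[a, b], [c, d]] = mat2 a b c d"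
  unfolding mat2_def mat_of_rows_list_def by (rule eq_matI) (auto dest!: less_2_cases)

lemma mat2_mult:
  "mat2 a b c d * mat2 a' b' c' d' = mat2 (a*a' + b*c') (a*b' + b*d') (c*a' + d*c') (c*b' + d*d')"
  unfolding mat2_def by (rule eq_matI) (auto simp: scalar_prod_def numeral_2_eq_2 dest!: less_2_cases)

lemma mat2_add: "mat2 a b c d + mat2 a' b' c' d' = mat2 (a+a') (b+b') (c+c') (d+d')"
  unfolding mat2_def by (rule eq_matI) (auto dest!: less_2_cases)

lemma mat2_minus: "mat2 a b c d - mat2 a' b' c' d' = mat2 (a-a') (b-b') (c-c') (d-d')"
  unfolding mat2_def by (rule eq_matI) (auto dest!: less_2_cases)

lemma mat2_smult: "x \<cdot>\<^sub>m mat2 a b c d = mat2 (x*a) (x*b) (x*c) (x*d)"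
  unfolding mat2_def by (rule eq_matI) (auto dest!: less_2_cases)

lemma mat_adjoint_mat2: "mat_adjoint (mat2 a b c d) = mat2 (cnj a) (cnj c) (cnj b) (cnj d)"
  unfolding mat2_def by (rule eq_matI) (auto dest!: less_2_cases)

lemma one_mat2: "1\<^sub>m 2 = mat2 1 0 0 1"
  unfolding mat2_def by (rule eq_matI) (auto dest!: less_2_cases)

lemma zero_mat2: "0\<^sub>m 2 2 = mat2 0 0 0 0"
  unfolding mat2_def by (rule eq_matI) (auto dest!: less_2_cases)

lemma mat2_eq_iff: "mat2 a b c d = mat2 a' b' c' d' \<longleftrightarrow> a = a' \<and> b = b' \<and> c = c' \<and> d = d'"
proof
  assume "mat2 a b c d = mat2 a' b' c' d'"
  then have "mat2 a b c d $$ (i, j) = mat2 a' b' c' d' $$ (i, j)" for i j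
    by simp
  from this[of 0 0] this[of 0 1] this[of 1 0] this[of 1 1]
  show "a = a' \<and> b = b' \<and> c = c' \<and> d = d'"
    unfolding mat2_def by simp
qed simp

lemma pauli_mat2:
  "pauli 0 = mat2 1 0 0 1" "pauli 1 = mat2 0 1 1 0" "pauli 2 = mat2 0 (-\<i>) \<i> 0" "pauli 3 = mat2 1 0 0 (-1)"
  by (simp_all add: pauli_def mat_of_rows_list_mat2)

lemma proj_mat2: "proj0 = mat2 1 0 0 0" "proj1 = mat2 0 0 0 1"
  by (simp_all add: proj0_def proj1_def mat_of_rows_list_mat2)

lemma pauli_carrier [simp]: "pauli k \<in> carrier_mat 2 2"
  by (simp add: pauli_def mat_of_rows_list_mat2)

lemma proj_carrier [simp]: "proj0 \<in> carrier_mat 2 2" "proj1 \<in> carrier_mat 2 2"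
  by (simp_all add: proj_mat2)

lemma rot_mat2: "rot t = mat2 (cos t) (- sin t) (sin t) (cos t)"
proof -
  have "\<i> * x * \<i> = - x" for x :: complex
    by (metis complex_i_mult_minus mult.commute mult.left_commute)
  then show ?thesis
    unfolding rot_def pauli_mat2 mat2_smult mat2_minus by (simp add: mat2_eq_iff)
qed

lemma rot_carrier [simp]: "rot t \<in> carrier_mat 2 2"
  by (simp add: rot_mat2)

lemma mat_adjoint_rot_mult_rot: "mat_adjoint (rot t) * rot t = 1\<^sub>m 2"
proof -
  have "complex_of_real (cos t) * cos t + complex_of_real (sin t) * sin t = 1"
    by (metis of_real_1 of_real_add of_real_mult sin_cos_squared_add3 add.commute)
  then show ?thesis
    unfolding rot_mat2 mat_adjoint_mat2 mat2_mult one_mat2 mat2_eq_iff by (simp add: algebra_simps)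
qed

lemma rot_conj_pauli:
  "mat_adjoint (rot t) * pauli 1 * rot t = complex_of_real (cos (2*t)) \<cdot>\<^sub>m pauli 1 + complex_of_real (sin (2*t)) \<cdot>\<^sub>m pauli 3"
  "mat_adjoint (rot t) * pauli 3 * rot t = complex_of_real (cos (2*t)) \<cdot>\<^sub>m pauli 3 + complex_of_real (- sin (2*t)) \<cdot>\<^sub>m pauli 1"
proof -
  have "complex_of_real (cos (2*t)) = cos t * cos t - sin t * sin t"
    "complex_of_real (sin (2*t)) = 2 * sin t * cos t"
    by (simp_all add: cos_double sin_double power2_eq_square)
  then show
    "mat_adjoint (rot t) * pauli 1 * rot t = complex_of_real (cos (2*t)) \<cdot>\<^sub>m pauli 1 + complex_of_real (sin (2*t)) \<cdot>\<^sub>m pauli 3"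
    "mat_adjoint (rot t) * pauli 3 * rot t = complex_of_real (cos (2*t)) \<cdot>\<^sub>m pauli 3 + complex_of_real (- sin (2*t)) \<cdot>\<^sub>m pauli 1"
    unfolding rot_mat2 pauli_mat2 mat_adjoint_mat2 mat2_mult mat2_smult mat2_add mat2_eq_iff of_real_minus
    by (simp_all add: algebra_simps)
qed

lemma unitary_on_qubit_rot:
  assumes q: "1 \<le> q" "q \<le> n"
  shows "unitary (2 ^ n) (on_qubit n q (rot t))"
  unfolding unitary_def
  by (simp add: mat_adjoint_on_qubit on_qubit_mult[OF q] mat_adjoint_rot_mult_rot on_qubit_one[OF q])

lemma cnot_carrier [simp]: "cnot n c t \<in> carrier_mat (2 ^ n) (2 ^ n)"
  by (simp add: cnot_def mult_carrier_mat[of _ "2 ^ n" "2 ^ n" _ "2 ^ n"])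

lemma unitary_cnot:
  assumes c: "1 \<le> c" "c \<le> n" and t: "1 \<le> t" "t \<le> n" and ct: "c \<noteq> t"
  shows "unitary (2 ^ n) (cnot n c t)"
proof -
  define d where "d = (2::nat) ^ n"
  note assoc = assoc_mult_mat[of _ d d _ d _ d]
  define P0 where "P0 = on_qubit n c proj0"
  define P1 where "P1 = on_qubit n c proj1"
  define X where "X = on_qubit n t (pauli 1)"
  have carrier: "P0 \<in> carrier_mat d d" "P1 \<in> carrier_mat d d" "X \<in> carrier_mat d d"
    by (simp_all add: P0_def P1_def X_def d_def)
  have "proj0 * proj0 = proj0" "proj1 * proj1 = proj1" "proj0 * proj1 = 0\<^sub>m 2 2" "proj1 * proj0 = 0\<^sub>m 2 2"
    "proj0 + proj1 = 1\<^sub>m 2"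
    by (simp_all add: proj_mat2 mat2_mult mat2_add zero_mat2 one_mat2)
  then have proj: "P0 * P0 = P0" "P1 * P1 = P1" "P0 * P1 = 0\<^sub>m d d" "P1 * P0 = 0\<^sub>m d d" "P0 + P1 = 1\<^sub>m d"
    unfolding P0_def P1_def d_def
    by (simp_all add: on_qubit_mult[OF c] on_qubit_zero flip: on_qubit_add on_qubit_one[OF c])
  have XX: "X * X = 1\<^sub>m d"
    unfolding X_def d_def on_qubit_mult[OF t pauli_carrier pauli_carrier]
    by (simp add: pauli_mat2 mat2_mult flip: one_mat2 on_qubit_one[OF t])
  have P1X: "P1 * X = X * P1"
    unfolding P1_def X_def by (rule on_qubit_commute[OF c t ct])
  have adj: "mat_adjoint P0 = P0" "mat_adjoint P1 = P1" "mat_adjoint X = X"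
    unfolding P0_def P1_def X_def
    by (simp_all add: mat_adjoint_on_qubit proj_mat2 pauli_mat2 mat_adjoint_mat2)
  have "mat_adjoint (cnot n c t) = P0 + X * P1"
    unfolding cnot_def P0_def[symmetric] P1_def[symmetric] X_def[symmetric]
    using carrier by (simp add: mat_adjoint_add[of _ d d] mat_adjoint_mult[of _ d d _ d] adj)
  then have "mat_adjoint (cnot n c t) * cnot n c t = (P0 + X * P1) * (P0 + P1 * X)"
    unfolding cnot_def P0_def[symmetric] P1_def[symmetric] X_def[symmetric] by simp
  also have "\<dots> = P0 * P0 + (X * (P1 * P0) + ((P0 * P1) * X + X * ((P1 * P1) * X)))"
    using carrier by (simp add: add_mult_distrib_mat[of _ d d _ _ d] mult_add_distrib_mat[of _ d d _ d]
        assoc assoc_add_mat[of _ d d])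
  also have "X * ((P1 * P1) * X) = (X * X) * P1"
    using carrier by (simp add: proj P1X assoc)
  also note XX
  also have "P0 * P0 + (X * (P1 * P0) + ((P0 * P1) * X + 1\<^sub>m d * P1)) = P0 + P1"
    using carrier by (simp add: proj)
  finally show ?thesis
    using proj XX by (simp add: unitary_def d_def)
qed

lemma cnot_commute_on_qubit_1_pauli_1:
  assumes c: "2 \<le> c" "c \<le> n" and t: "1 \<le> t" "t \<le> n"
  shows "cnot n c t * on_qubit n 1 (pauli 1) = on_qubit n 1 (pauli 1) * cnot n c t"
proof -
  define d where "d = (2::nat) ^ n"
  note assoc = assoc_mult_mat[of _ d d _ d _ d]
  define P0 where "P0 = on_qubit n c proj0"
  define P1 where "P1 = on_qubit n c proj1"
  define X where "X = on_qubit n t (pauli 1)"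
  define X1 where "X1 = on_qubit n 1 (pauli 1)"
  have carrier: "P0 \<in> carrier_mat d d" "P1 \<in> carrier_mat d d" "X \<in> carrier_mat d d" "X1 \<in> carrier_mat d d"
    by (simp_all add: P0_def P1_def X_def X1_def d_def)
  have P_X1: "P0 * X1 = X1 * P0" "P1 * X1 = X1 * P1"
    unfolding P0_def P1_def X1_def using c t by (auto intro!: on_qubit_commute)
  have X_X1: "X * X1 = X1 * X"
    unfolding X_def X1_def using t by (cases "t = 1") (auto intro!: on_qubit_commute)
  have "cnot n c t * X1 = P0 * X1 + (P1 * X1) * X"
    unfolding cnot_def P0_def[symmetric] P1_def[symmetric] X_def[symmetric]
    using carrier by (simp add: add_mult_distrib_mat[of _ d d _ _ d] assoc X_X1)
  also have "\<dots> = X1 * cnot n c t"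
    unfolding cnot_def P0_def[symmetric] P1_def[symmetric] X_def[symmetric]
    using carrier by (simp add: mult_add_distrib_mat[of _ d d] assoc P_X1)
  finally show ?thesis by (simp add: X1_def)
qed

section \<open>Layers of the tree tensor network\<close>

lemma V_layer_qubit_bounds:
  fixes l m n j :: nat
  assumes "1 \<le> l" "l \<le> m + 1" "n = 2 ^ m" "2 \<le> j" "j \<le> n div 2 ^ (l - 1)"
  shows "2 \<le> (j - 1) * 2 ^ (l - 1) + 1" "(j - 1) * 2 ^ (l - 1) + 1 \<le> n"
proof -
  define h where "h = (2::nat) ^ (l - 1)"
  have h: "1 \<le> h" by (simp add: h_def)
  have "j * h \<le> n"
    using assms(5) h unfolding h_def by (simp add: less_eq_div_iff_mult_less_eq)
  moreover obtain i where i: "j = Suc i" "1 \<le> i"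
    using assms(4) by (cases j) auto
  moreover have "(j - 1) * h = i * h" "j * h = i * h + h"
    using i by simp_all
  moreover have "1 \<le> i * h"
    using h i by (metis mult_le_mono mult_1)
  ultimately show "2 \<le> (j - 1) * 2 ^ (l - 1) + 1" "(j - 1) * 2 ^ (l - 1) + 1 \<le> n"
    unfolding h_def[symmetric] using h by linarith+
qed

lemma CX_layer_qubit_bounds:
  fixes l m n j :: nat
  assumes "1 \<le> l" "l \<le> m" "n = 2 ^ m" "1 \<le> j" "j \<le> n div 2 ^ l"
  shows "2 \<le> (2 * j - 1) * 2 ^ (l - 1) + 1" "(2 * j - 1) * 2 ^ (l - 1) + 1 \<le> n"
    "1 \<le> (j - 1) * 2 ^ l + 1" "(j - 1) * 2 ^ l + 1 \<le> n"
    "(2 * j - 1) * 2 ^ (l - 1) + 1 \<noteq> (j - 1) * 2 ^ l + 1"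
proof -
  define h where "h = (2::nat) ^ (l - 1)"
  have h: "1 \<le> h" by (simp add: h_def)
  have l2: "(2::nat) ^ l = 2 * h"
    unfolding h_def using assms(1) by (metis Suc_diff_le diff_Suc_1 power_Suc)
  have "2 * j * h \<le> n"
    using assms(5) h l2 by (simp add: less_eq_div_iff_mult_less_eq mult.assoc mult.left_commute)
  moreover obtain i where "j = Suc i"
    using assms(4) by (cases j) auto
  moreover have "(2 * j - 1) * h = 2 * i * h + h" "(j - 1) * (2 * h) = 2 * i * h" "2 * j * h = 2 * i * h + 2 * h"
    using \<open>j = Suc i\<close> by (simp_all add: algebra_simps)
  ultimately show "2 \<le> (2 * j - 1) * 2 ^ (l - 1) + 1" "(2 * j - 1) * 2 ^ (l - 1) + 1 \<le> n"
    "1 \<le> (j - 1) * 2 ^ l + 1" "(j - 1) * 2 ^ l + 1 \<le> n"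
    "(2 * j - 1) * 2 ^ (l - 1) + 1 \<noteq> (j - 1) * 2 ^ l + 1"
    unfolding h_def[symmetric] l2 using h by linarith+
qed

definition V_layer_rest :: "nat \<Rightarrow> nat \<Rightarrow> (nat \<times> nat \<Rightarrow> real) \<Rightarrow> complex mat" where
  "V_layer_rest n l \<theta> = mat_prod_list (2 ^ n)
     (map (\<lambda>j. on_qubit n ((j - 1) * 2 ^ (l - 1) + 1) (rot (\<theta> (l, j)))) [2..<n div 2 ^ (l - 1) + 1])"

lemma V_layer_eq_rot_mult_rest:
  fixes l m n :: nat
  assumes "1 \<le> l" "l \<le> m + 1" "n = 2 ^ m"
  shows "V_layer n l \<theta> = on_qubit n 1 (rot (\<theta> (l, 1))) * V_layer_rest n l \<theta>"
proof -
  have "(2::nat) ^ (l - 1) \<le> 2 ^ m"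
    using assms by (intro power_increasing) auto
  then have "0 < n div 2 ^ (l - 1)"
    using assms(3) by (simp add: div_greater_zero_iff)
  then have "[1..<n div 2 ^ (l - 1) + 1] = 1 # [2..<n div 2 ^ (l - 1) + 1]"
    by (simp add: upt_conv_Cons Suc_le_eq)
  then show ?thesis
    unfolding V_layer_def V_layer_rest_def by (simp add: mat_prod_list_Cons)
qed

lemma layer_carrier [simp]:
  "V_layer n l \<theta> \<in> carrier_mat (2 ^ n) (2 ^ n)"
  "V_layer_rest n l \<theta> \<in> carrier_mat (2 ^ n) (2 ^ n)"
  "CX_layer n l \<in> carrier_mat (2 ^ n) (2 ^ n)"
  unfolding V_layer_def V_layer_rest_def CX_layer_def by (auto intro!: mat_prod_list_carrier)

lemma TT_partial_carrier [simp]: "TT_partial n k \<theta> \<in> carrier_mat (2 ^ n) (2 ^ n)"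
  by (induction n k \<theta> rule: TT_partial.induct) auto

lemma unitary_V_layer_rest:
  fixes l m n :: nat
  assumes "1 \<le> l" "l \<le> m + 1" "n = 2 ^ m"
  shows "unitary (2 ^ n) (V_layer_rest n l \<theta>)"
  unfolding V_layer_rest_def using V_layer_qubit_bounds[OF assms]
  by (intro unitary_mat_prod_list) (auto intro!: unitary_on_qubit_rot)

lemma V_layer_rest_commute_on_qubit_1:
  fixes l m n :: nat
  assumes "1 \<le> l" "l \<le> m + 1" "n = 2 ^ m"
  shows "V_layer_rest n l \<theta> * on_qubit n 1 B = on_qubit n 1 B * V_layer_rest n l \<theta>"
  unfolding V_layer_rest_def using V_layer_qubit_bounds[OF assms] assms(3)
  by (intro mat_prod_list_commute) (auto intro!: on_qubit_commute)

lemma unitary_CX_layer: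
  fixes l m n :: nat
  assumes "1 \<le> l" "l \<le> m" "n = 2 ^ m"
  shows "unitary (2 ^ n) (CX_layer n l)"
  unfolding CX_layer_def using CX_layer_qubit_bounds[OF assms]
  by (intro unitary_mat_prod_list) (auto intro!: unitary_cnot)

lemma CX_layer_commute_on_qubit_1_pauli_1:
  fixes l m n :: nat
  assumes "1 \<le> l" "l \<le> m" "n = 2 ^ m"
  shows "CX_layer n l * on_qubit n 1 (pauli 1) = on_qubit n 1 (pauli 1) * CX_layer n l"
  unfolding CX_layer_def using CX_layer_qubit_bounds[OF assms]
  by (intro mat_prod_list_commute) (auto intro!: cnot_commute_on_qubit_1_pauli_1)

lemma mat_trace_on_qubit_1_V_layer_conj:
  fixes l m n :: nat
  assumes l: "1 \<le> l" "l \<le> m + 1" and n: "n = 2 ^ m"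
    and T: "T \<in> carrier_mat (2 ^ n) (2 ^ n)" and A: "A \<in> carrier_mat 2 2"
  shows "mat_trace (on_qubit n 1 A * (V_layer n l \<theta> * T * mat_adjoint (V_layer n l \<theta>))) =
    mat_trace (on_qubit n 1 (mat_adjoint (rot (\<theta> (l, 1))) * A * rot (\<theta> (l, 1))) * T)"
proof -
  define d where "d = (2::nat) ^ n"
  note assoc = assoc_mult_mat[of _ d d _ d _ d]
  have qubit_1: "1 \<le> (1::nat)" "1 \<le> n" using n by auto
  define R where "R = on_qubit n 1 (rot (\<theta> (l, 1)))"
  define W where "W = V_layer_rest n l \<theta>"
  define A' where "A' = mat_adjoint (rot (\<theta> (l, 1))) * A * rot (\<theta> (l, 1))"
  have carrier: "R \<in> carrier_mat d d" "W \<in> carrier_mat d d" "T \<in> carrier_mat d d"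
    "on_qubit n 1 A \<in> carrier_mat d d" "mat_adjoint R \<in> carrier_mat d d" "mat_adjoint W \<in> carrier_mat d d"
    "W * T * mat_adjoint W \<in> carrier_mat d d" "A' \<in> carrier_mat 2 2"
    using T A by (simp_all add: R_def W_def A'_def d_def)
  have "V_layer n l \<theta> * T * mat_adjoint (V_layer n l \<theta>) = R * (W * T * mat_adjoint W) * mat_adjoint R"
    unfolding V_layer_eq_rot_mult_rest[OF l n] R_def[symmetric] W_def[symmetric]
    using carrier by (simp add: mat_adjoint_mult[of _ d d _ d] assoc)
  then have "mat_trace (on_qubit n 1 A * (V_layer n l \<theta> * T * mat_adjoint (V_layer n l \<theta>))) =
     mat_trace (mat_adjoint R * on_qubit n 1 A * R * (W * T * mat_adjoint W))"
    using mat_trace_mult_conj[of "on_qubit n 1 A" d "W * T * mat_adjoint W" R] carrier by (simp add: assoc)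
  also have "mat_adjoint R * on_qubit n 1 A * R = on_qubit n 1 A'"
    unfolding R_def A'_def using A by (simp add: mat_adjoint_on_qubit on_qubit_mult[OF qubit_1])
  also have "mat_trace (on_qubit n 1 A' * (W * T * mat_adjoint W)) = mat_trace (on_qubit n 1 A' * T)"
    unfolding W_def
    by (rule mat_trace_conj_commuting_unitary[OF _ T unitary_V_layer_rest[OF l n]
          V_layer_rest_commute_on_qubit_1[OF l n]]) simp
  finally show ?thesis
    unfolding A'_def .
qed

section \<open>Expectations on qubit 1 along the circuit\<close>

definition TT_state :: "nat \<Rightarrow> complex mat \<Rightarrow> nat \<Rightarrow> (nat \<times> nat \<Rightarrow> real) \<Rightarrow> complex mat" where
  "TT_state n \<rho> k \<theta> = TT_partial n k \<theta> * \<rho> * mat_adjoint (TT_partial n k \<theta>)"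

text \<open>The state entering the rotation layer \<open>V\<^sub>k\<^sub>+\<^sub>1\<close>.\<close>
definition TT_state_CX :: "nat \<Rightarrow> complex mat \<Rightarrow> nat \<Rightarrow> (nat \<times> nat \<Rightarrow> real) \<Rightarrow> complex mat" where
  "TT_state_CX n \<rho> k \<theta> =
    (if k = 0 then \<rho> else CX_layer n k * TT_state n \<rho> k \<theta> * mat_adjoint (CX_layer n k))"

definition expect :: "complex mat \<Rightarrow> complex mat \<Rightarrow> real" where
  "expect A \<rho> = Re (mat_trace (A * \<rho>))"

lemma TT_state_carrier [simp]:
  "\<rho> \<in> carrier_mat (2 ^ n) (2 ^ n) \<Longrightarrow> TT_state n \<rho> k \<theta> \<in> carrier_mat (2 ^ n) (2 ^ n)"
  "\<rho> \<in> carrier_mat (2 ^ n) (2 ^ n) \<Longrightarrow> TT_state_CX n \<rho> k \<theta> \<in> carrier_mat (2 ^ n) (2 ^ n)"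
  unfolding TT_state_def TT_state_CX_def by simp_all

lemma TT_state_Suc:
  assumes \<rho>: "\<rho> \<in> carrier_mat (2 ^ n) (2 ^ n)"
  shows "TT_state n \<rho> (Suc k) \<theta> = V_layer n (Suc k) \<theta> * TT_state_CX n \<rho> k \<theta> * mat_adjoint (V_layer n (Suc k) \<theta>)"
proof (cases k)
  case 0
  then show ?thesis by (simp add: TT_state_def TT_state_CX_def One_nat_def)
next
  case (Suc k')
  define d where "d = (2::nat) ^ n"
  note assoc = assoc_mult_mat[of _ d d _ d _ d]
  define V where "V = V_layer n (Suc k) \<theta>"
  define C where "C = CX_layer n k"
  define T where "T = TT_partial n k \<theta>"
  have carrier: "V \<in> carrier_mat d d" "C \<in> carrier_mat d d" "T \<in> carrier_mat d d" "\<rho> \<in> carrier_mat d d"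
    "mat_adjoint V \<in> carrier_mat d d" "mat_adjoint C \<in> carrier_mat d d" "mat_adjoint T \<in> carrier_mat d d"
    using \<rho> by (simp_all add: V_def C_def T_def d_def)
  have "TT_partial n (Suc k) \<theta> = V * C * T"
    unfolding V_def C_def T_def using Suc by (simp add: One_nat_def)
  then have "TT_state n \<rho> (Suc k) \<theta> = V * C * T * \<rho> * mat_adjoint (V * C * T)"
    by (simp add: TT_state_def)
  also have "\<dots> = V * (C * (T * \<rho> * mat_adjoint T) * mat_adjoint C) * mat_adjoint V"
    using carrier by (simp add: mat_adjoint_mult[of _ d d _ d] assoc)
  also have "\<dots> = V * TT_state_CX n \<rho> k \<theta> * mat_adjoint V"
    using Suc by (simp add: TT_state_CX_def TT_state_def C_def T_def)
  finally show ?thesis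
    by (simp add: V_def)
qed

lemma expect_on_qubit_lincomb:
  assumes "A \<in> carrier_mat 2 2" "B \<in> carrier_mat 2 2" and T: "T \<in> carrier_mat (2 ^ n) (2 ^ n)"
  shows "expect (on_qubit n q (complex_of_real a \<cdot>\<^sub>m A + complex_of_real b \<cdot>\<^sub>m B)) T =
    a * expect (on_qubit n q A) T + b * expect (on_qubit n q B) T"
proof -
  define d where "d = (2::nat) ^ n"
  have carrier: "on_qubit n q A \<in> carrier_mat d d" "on_qubit n q B \<in> carrier_mat d d" "T \<in> carrier_mat d d"
    using T by (simp_all add: d_def)
  have "on_qubit n q (complex_of_real a \<cdot>\<^sub>m A + complex_of_real b \<cdot>\<^sub>m B) =
     complex_of_real a \<cdot>\<^sub>m on_qubit n q A + complex_of_real b \<cdot>\<^sub>m on_qubit n q B"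
    using assms by (simp add: on_qubit_add on_qubit_smult)
  then have "mat_trace (on_qubit n q (complex_of_real a \<cdot>\<^sub>m A + complex_of_real b \<cdot>\<^sub>m B) * T) =
      complex_of_real a * mat_trace (on_qubit n q A * T) + complex_of_real b * mat_trace (on_qubit n q B * T)"
    using carrier by (simp add: add_mult_distrib_mat[of _ d d _ _ d] mult_smult_assoc_mat[of _ d d _ d]
        mat_trace_add[of _ d] mat_trace_smult[of _ d])
  then show ?thesis
    unfolding expect_def by simp
qed

lemma expect_TT_state_Suc:
  fixes k m n :: nat and \<theta> :: "nat \<times> nat \<Rightarrow> real"
  assumes k: "k \<le> m" and n: "n = 2 ^ m" and \<rho>: "\<rho> \<in> carrier_mat (2 ^ n) (2 ^ n)"
  defines "t \<equiv> \<theta> (Suc k, 1)" and "X \<equiv> on_qubit n 1 (pauli 1)" and "Z \<equiv> on_qubit n 1 (pauli 3)"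
  shows "expect X (TT_state n \<rho> (Suc k) \<theta>) =
      cos (2 * t) * expect X (TT_state_CX n \<rho> k \<theta>) + sin (2 * t) * expect Z (TT_state_CX n \<rho> k \<theta>)"
    and "expect Z (TT_state n \<rho> (Suc k) \<theta>) =
      cos (2 * t) * expect Z (TT_state_CX n \<rho> k \<theta>) + (- sin (2 * t)) * expect X (TT_state_CX n \<rho> k \<theta>)"
proof -
  have l: "1 \<le> Suc k" "Suc k \<le> m + 1" using k by auto
  have conj: "expect (on_qubit n 1 (pauli j)) (TT_state n \<rho> (Suc k) \<theta>) =
     expect (on_qubit n 1 (mat_adjoint (rot t) * pauli j * rot t)) (TT_state_CX n \<rho> k \<theta>)" for j
    unfolding expect_def TT_state_Suc[OF \<rho>] t_def
    using mat_trace_on_qubit_1_V_layer_conj[OF l n TT_state_carrier(2)[OF \<rho>] pauli_carrier] by simp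
  show "expect X (TT_state n \<rho> (Suc k) \<theta>) =
      cos (2 * t) * expect X (TT_state_CX n \<rho> k \<theta>) + sin (2 * t) * expect Z (TT_state_CX n \<rho> k \<theta>)"
    unfolding X_def Z_def conj rot_conj_pauli
    by (simp only: expect_on_qubit_lincomb[OF pauli_carrier pauli_carrier TT_state_carrier(2)[OF \<rho>]])
  show "expect Z (TT_state n \<rho> (Suc k) \<theta>) =
      cos (2 * t) * expect Z (TT_state_CX n \<rho> k \<theta>) + (- sin (2 * t)) * expect X (TT_state_CX n \<rho> k \<theta>)"
    unfolding X_def Z_def conj rot_conj_pauli
    by (simp only: expect_on_qubit_lincomb[OF pauli_carrier pauli_carrier TT_state_carrier(2)[OF \<rho>]])
qed

lemma expect_pauli_1_TT_state_CX:
  fixes k m n :: nat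
  assumes k: "1 \<le> k" "k \<le> m" and n: "n = 2 ^ m" and \<rho>: "\<rho> \<in> carrier_mat (2 ^ n) (2 ^ n)"
  shows "expect (on_qubit n 1 (pauli 1)) (TT_state_CX n \<rho> k \<theta>) = expect (on_qubit n 1 (pauli 1)) (TT_state n \<rho> k \<theta>)"
  unfolding expect_def TT_state_CX_def using k
  by (simp add: mat_trace_conj_commuting_unitary[OF _ TT_state_carrier(1)[OF \<rho>] unitary_CX_layer[OF k n]
        CX_layer_commute_on_qubit_1_pauli_1[OF k n]])

lemma f_TT_eq_expect:
  assumes \<rho>: "\<rho> \<in> carrier_mat (2 ^ n) (2 ^ n)"
  shows "f_TT n m \<rho> \<theta> - 1/2 = 1/2 * expect (on_qubit n 1 (pauli 3)) (TT_state n \<rho> (Suc m) \<theta>)"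
  using \<rho> by (simp add: f_TT_def expect_def TT_state_def V_TT_def One_nat_def assoc_mult_mat[of _ "2 ^ n" "2 ^ n" _ "2 ^ n" _ "2 ^ n"])

section \<open>Averaging over uniformly random angles\<close>

abbreviation uniform_angle :: "real measure" where
  "uniform_angle \<equiv> uniform_measure lborel {0..2 * pi}"

lemma prob_space_uniform_angle: "prob_space uniform_angle"
  by (rule prob_space_uniform_measure) auto

lemma integral_uniform_angle:
  fixes f :: "real \<Rightarrow> real"
  assumes f: "continuous_on UNIV f"
  shows "(\<integral>x. f x \<partial>uniform_angle) = (LBINT x : {0..2 * pi}. f x) / (2 * pi)"
proof -
  have "1 / ennreal (2 * pi) = ennreal (1 / (2 * pi))"
    using divide_ennreal[of 1 "2 * pi"] by simp
  then have density: "uniform_angle = density lborel (\<lambda>x. ennreal (indicator {0..2 * pi} x / (2 * pi)))"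
    unfolding uniform_measure_def by (intro density_cong) (auto simp: indicator_def)
  have "f \<in> borel_measurable borel"
    by (rule borel_measurable_continuous_onI[OF f])
  then have "(\<integral>x. f x \<partial>uniform_angle) = (\<integral>x. (indicator {0..2 * pi} x / (2 * pi)) *\<^sub>R f x \<partial>lborel)"
    unfolding density by (intro integral_density) auto
  also have "\<dots> = (LBINT x : {0..2 * pi}. f x) / (2 * pi)"
    by (simp add: indicator_def set_lebesgue_integral_def)
  finally show ?thesis .
qed

lemma integral_uniform_angle_FTC:
  fixes f F :: "real \<Rightarrow> real"
  assumes "continuous_on UNIV f" "\<And>x. (F has_real_derivative f x) (at x)"
  shows "(\<integral>x. f x \<partial>uniform_angle) = (F (2 * pi) - F 0) / (2 * pi)"
proof -
  have "(LBINT x = ereal 0..ereal (2 * pi). f x) = F (2 * pi) - F 0"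
    using assms by (intro interval_integral_FTC_finite)
      (auto intro: continuous_on_subset has_field_derivative_at_within
        simp: has_real_derivative_iff_has_vector_derivative[symmetric])
  then show ?thesis
    using interval_integral_Icc[of 0 "2 * pi" f] integral_uniform_angle[OF assms(1)] by simp
qed

lemma integral_uniform_angle_trig:
  "(\<integral>t. (cos (2 * t))\<^sup>2 \<partial>uniform_angle) = 1/2"
  "(\<integral>t. (sin (2 * t))\<^sup>2 \<partial>uniform_angle) = 1/2"
  "(\<integral>t. cos (2 * t) * sin (2 * t) \<partial>uniform_angle) = 0"
proof -
  have cos_4: "cos (x * 4) = 2 * (cos (x * 2))\<^sup>2 - 1" "cos (x * 4) = 1 - 2 * (sin (x * 2))\<^sup>2" for x :: real
    using cos_double_cos[of "2 * x"] cos_double_sin[of "2 * x"] by (simp_all add: mult.commute)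
  show "(\<integral>t. (cos (2 * t))\<^sup>2 \<partial>uniform_angle) = 1/2"
    by (subst integral_uniform_angle_FTC[where F = "\<lambda>x. x / 2 + sin (4 * x) / 8"])
      (auto intro!: continuous_intros derivative_eq_intros simp: cos_4(1) field_simps)
  show "(\<integral>t. (sin (2 * t))\<^sup>2 \<partial>uniform_angle) = 1/2"
    by (subst integral_uniform_angle_FTC[where F = "\<lambda>x. x / 2 - sin (4 * x) / 8"])
      (auto intro!: continuous_intros derivative_eq_intros simp: cos_4(2) field_simps)
  show "(\<integral>t. cos (2 * t) * sin (2 * t) \<partial>uniform_angle) = 0"
    by (subst integral_uniform_angle_FTC[where F = "\<lambda>x. (sin (2 * x))\<^sup>2 / 4"])
      (auto intro!: continuous_intros derivative_eq_intros simp: field_simps)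
qed

lemma product_prob_space_uniform_angle: "product_prob_space (\<lambda>_. uniform_angle)"
  unfolding product_prob_space_def product_prob_space_axioms_def product_sigma_finite_def
  using prob_space_uniform_angle by (auto simp: prob_space_imp_sigma_finite)

lemma prob_space_PiM_uniform_angle: "prob_space (PiM I (\<lambda>_. uniform_angle))"
proof -
  interpret product_prob_space "\<lambda>_. uniform_angle" I
    by (rule product_prob_space_uniform_angle)
  show ?thesis
    by (rule P.prob_space_axioms)
qed

lemma borel_measurable_PiM_uniform_angle_component:
  assumes i: "i \<in> I" and h: "continuous_on UNIV (h :: real \<Rightarrow> 'b::topological_space)"
  shows "(\<lambda>x. h (x i)) \<in> borel_measurable (PiM I (\<lambda>_. uniform_angle))"
proof -
  have "(\<lambda>x. x i) \<in> measurable (PiM I (\<lambda>_. uniform_angle)) uniform_angle"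
    by (rule measurable_component_singleton[OF i])
  moreover have "measurable (PiM I (\<lambda>_. uniform_angle)) uniform_angle = borel_measurable (PiM I (\<lambda>_. uniform_angle))"
    by (rule measurable_cong_sets) auto
  ultimately show ?thesis
    by (intro borel_measurable_continuous_on[OF h]) simp
qed

lemma integrable_PiM_uniform_angle_bounded:
  fixes f :: "('i \<Rightarrow> real) \<Rightarrow> real"
  assumes "f \<in> borel_measurable (PiM I (\<lambda>_. uniform_angle))" "\<And>x. \<bar>f x\<bar> \<le> B"
  shows "integrable (PiM I (\<lambda>_. uniform_angle)) f"
proof -
  interpret prob_space "PiM I (\<lambda>_. uniform_angle)"
    by (rule prob_space_PiM_uniform_angle)
  show ?thesis
    by (rule integrable_const_bound[where B = B]) (use assms in auto)
qed

lemma integrable_mult_bounded_component: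
  assumes i: "i \<in> I" and g: "g \<in> borel_measurable (PiM I (\<lambda>_. uniform_angle))" and g_bound: "\<And>x. \<bar>g x\<bar> \<le> B"
    and h: "continuous_on UNIV h" and h_bound: "\<And>t. \<bar>h t\<bar> \<le> (1::real)"
  shows "integrable (PiM I (\<lambda>_. uniform_angle)) (\<lambda>x. g x * h (x i))"
proof (rule integrable_PiM_uniform_angle_bounded)
  show "(\<lambda>x. g x * h (x i)) \<in> borel_measurable (PiM I (\<lambda>_. uniform_angle))"
    using g borel_measurable_PiM_uniform_angle_component[OF i h] by (rule borel_measurable_times)
  fix x
  have "\<bar>g x\<bar> * \<bar>h (x i)\<bar> \<le> \<bar>g x\<bar> * 1"
    by (rule mult_left_mono[OF h_bound]) simp
  then show "\<bar>g x * h (x i)\<bar> \<le> B"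
    using g_bound[of x] by (simp add: abs_mult)
qed

text \<open>Fubini over the coordinate \<open>i\<close>, on which \<open>g\<close> does not depend.\<close>
lemma integral_mult_independent_component:
  fixes g :: "('i \<Rightarrow> real) \<Rightarrow> real" and h :: "real \<Rightarrow> real"
  assumes I: "finite I" and i: "i \<in> I"
    and g: "g \<in> borel_measurable (PiM I (\<lambda>_. uniform_angle))" and g_bound: "\<And>x. \<bar>g x\<bar> \<le> B"
    and g_indep: "\<And>x t. g (x(i := t)) = g x"
    and h: "continuous_on UNIV h" and h_bound: "\<And>t. \<bar>h t\<bar> \<le> 1"
  shows "(\<integral>x. g x * h (x i) \<partial>PiM I (\<lambda>_. uniform_angle)) =
    (\<integral>x. g x \<partial>PiM I (\<lambda>_. uniform_angle)) * (\<integral>t. h t \<partial>uniform_angle)"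
proof -
  interpret product_sigma_finite "\<lambda>_. uniform_angle"
    using product_prob_space_uniform_angle product_prob_space_def by blast
  interpret U: prob_space uniform_angle
    by (rule prob_space_uniform_angle)
  define G where "G x = g (x(i := 0))" for x
  have g_G: "g (x(i := t)) = G x" for x t
    unfolding G_def using g_indep[of "x(i := 0)" t] by simp
  define J where "J = I - {i}"
  have IJ: "I = insert i J" and iJ: "i \<notin> J" and J: "finite J"
    using i I by (auto simp: J_def)
  have gh: "integrable (PiM I (\<lambda>_. uniform_angle)) (\<lambda>x. g x * h (x i))"
    by (rule integrable_mult_bounded_component[OF i g g_bound h h_bound])
  have "integrable (PiM I (\<lambda>_. uniform_angle)) g"
    by (rule integrable_PiM_uniform_angle_bounded[OF g g_bound])
  then have "(\<integral>x. g x \<partial>PiM I (\<lambda>_. uniform_angle)) =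
      (\<integral>x. (\<integral>t. g (x(i := t)) \<partial>uniform_angle) \<partial>PiM J (\<lambda>_. uniform_angle))"
    using product_integral_insert[OF J iJ, of g] unfolding IJ by simp
  also have "\<dots> = (\<integral>x. G x \<partial>PiM J (\<lambda>_. uniform_angle))"
    by (simp add: g_G U.prob_space)
  finally have g_int: "(\<integral>x. g x \<partial>PiM I (\<lambda>_. uniform_angle)) = (\<integral>x. G x \<partial>PiM J (\<lambda>_. uniform_angle))" .
  have "(\<integral>x. g x * h (x i) \<partial>PiM I (\<lambda>_. uniform_angle)) =
      (\<integral>x. (\<integral>t. g (x(i := t)) * h t \<partial>uniform_angle) \<partial>PiM J (\<lambda>_. uniform_angle))"
    using product_integral_insert[OF J iJ, of "\<lambda>x. g x * h (x i)"] gh unfolding IJ by simp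
  also have "\<dots> = (\<integral>x. G x * (\<integral>t. h t \<partial>uniform_angle) \<partial>PiM J (\<lambda>_. uniform_angle))"
    by (simp add: g_G)
  also have "\<dots> = (\<integral>x. g x \<partial>PiM I (\<lambda>_. uniform_angle)) * (\<integral>t. h t \<partial>uniform_angle)"
    by (simp add: g_int)
  finally show ?thesis .
qed

lemma integral_rotation_square:
  fixes a b :: "('i \<Rightarrow> real) \<Rightarrow> real"
  assumes I: "finite I" and i: "i \<in> I"
    and a: "a \<in> borel_measurable (PiM I (\<lambda>_. uniform_angle))" and a_bound: "\<And>x. \<bar>a x\<bar> \<le> A"
    and b: "b \<in> borel_measurable (PiM I (\<lambda>_. uniform_angle))" and b_bound: "\<And>x. \<bar>b x\<bar> \<le> B"
    and a_indep: "\<And>x t. a (x(i := t)) = a x" and b_indep: "\<And>x t. b (x(i := t)) = b x"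
  shows "(\<integral>x. (cos (2 * x i) * a x + sin (2 * x i) * b x)\<^sup>2 \<partial>PiM I (\<lambda>_. uniform_angle)) =
    ((\<integral>x. (a x)\<^sup>2 \<partial>PiM I (\<lambda>_. uniform_angle)) + (\<integral>x. (b x)\<^sup>2 \<partial>PiM I (\<lambda>_. uniform_angle))) / 2"
proof -
  let ?P = "PiM I (\<lambda>_. uniform_angle)"
  have "0 \<le> A" "0 \<le> B"
    using a_bound b_bound by (meson abs_ge_zero order_trans)+
  then have bounds: "\<bar>(a x)\<^sup>2\<bar> \<le> A * A" "\<bar>(b x)\<^sup>2\<bar> \<le> B * B" "\<bar>2 * a x * b x\<bar> \<le> 2 * A * B" for x
    using mult_mono[OF a_bound[of x] a_bound[of x]] mult_mono[OF b_bound[of x] b_bound[of x]]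
      mult_mono[OF a_bound[of x] b_bound[of x]]
    by (simp_all add: power2_eq_square abs_mult mult.assoc)
  have meas: "(\<lambda>x. (a x)\<^sup>2) \<in> borel_measurable ?P" "(\<lambda>x. (b x)\<^sup>2) \<in> borel_measurable ?P"
    "(\<lambda>x. 2 * a x * b x) \<in> borel_measurable ?P"
    using a b by simp_all
  have cont: "continuous_on UNIV (\<lambda>t::real. (cos (2 * t))\<^sup>2)" "continuous_on UNIV (\<lambda>t::real. (sin (2 * t))\<^sup>2)"
    "continuous_on UNIV (\<lambda>t::real. cos (2 * t) * sin (2 * t))"
    by (auto intro!: continuous_intros)
  have trig_bound: "\<bar>(cos (2 * t))\<^sup>2\<bar> \<le> 1" "\<bar>(sin (2 * t))\<^sup>2\<bar> \<le> 1" "\<bar>cos (2 * t) * sin (2 * t)\<bar> \<le> 1"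
    for t :: real
    by (auto simp: abs_mult abs_square_le_1 intro: mult_le_one)
  note indep = integral_mult_independent_component[OF I i]
  note integrable = integrable_mult_bounded_component[OF i]
  have "(\<integral>x. (cos (2 * x i) * a x + sin (2 * x i) * b x)\<^sup>2 \<partial>?P) =
     (\<integral>x. (a x)\<^sup>2 * (cos (2 * x i))\<^sup>2 + (2 * a x * b x) * (cos (2 * x i) * sin (2 * x i))
        + (b x)\<^sup>2 * (sin (2 * x i))\<^sup>2 \<partial>?P)"
    by (rule Bochner_Integration.integral_cong) (simp_all add: power2_eq_square algebra_simps)
  also have "\<dots> = (\<integral>x. (a x)\<^sup>2 * (cos (2 * x i))\<^sup>2 \<partial>?P)
      + (\<integral>x. (2 * a x * b x) * (cos (2 * x i) * sin (2 * x i)) \<partial>?P)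
      + (\<integral>x. (b x)\<^sup>2 * (sin (2 * x i))\<^sup>2 \<partial>?P)"
    using integrable[OF meas(1) bounds(1) cont(1) trig_bound(1)]
      integrable[OF meas(3) bounds(3) cont(3) trig_bound(3)]
      integrable[OF meas(2) bounds(2) cont(2) trig_bound(2)]
    by simp
  also have "\<dots> = ((\<integral>x. (a x)\<^sup>2 \<partial>?P) + (\<integral>x. (b x)\<^sup>2 \<partial>?P)) / 2"
    using indep[OF meas(1) bounds(1) _ cont(1) trig_bound(1)]
      indep[OF meas(3) bounds(3) _ cont(3) trig_bound(3)]
      indep[OF meas(2) bounds(2) _ cont(2) trig_bound(2)]
    by (simp add: a_indep b_indep integral_uniform_angle_trig)
  finally show ?thesis .
qed

section \<open>Measurability of the circuit\<close>

definition bounded_measurable_mat :: "'p measure \<Rightarrow> nat \<Rightarrow> ('p \<Rightarrow> complex mat) \<Rightarrow> bool" where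
  "bounded_measurable_mat P d A \<longleftrightarrow> (\<forall>x. A x \<in> carrier_mat d d) \<and>
     (\<forall>i<d. \<forall>j<d. (\<lambda>x. A x $$ (i, j)) \<in> borel_measurable P) \<and>
     (\<exists>B. \<forall>x i j. i < d \<longrightarrow> j < d \<longrightarrow> cmod (A x $$ (i, j)) \<le> B)"

lemma bounded_measurable_mat_const:
  assumes C: "C \<in> carrier_mat d d"
  shows "bounded_measurable_mat P d (\<lambda>_. C)"
proof -
  have "cmod (C $$ (i, j)) \<le> (\<Sum>i'<d. \<Sum>j'<d. cmod (C $$ (i', j')))" if "i < d" "j < d" for i j
  proof -
    have "cmod (C $$ (i, j)) \<le> (\<Sum>j'<d. cmod (C $$ (i, j')))"
      by (rule member_le_sum[where f = "\<lambda>j'. cmod (C $$ (i, j'))"]) (use that in auto)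
    also have "\<dots> \<le> (\<Sum>i'<d. \<Sum>j'<d. cmod (C $$ (i', j')))"
      by (rule member_le_sum[where f = "\<lambda>i'. \<Sum>j'<d. cmod (C $$ (i', j'))"])
        (use that in \<open>auto intro: sum_nonneg\<close>)
    finally show ?thesis .
  qed
  then show ?thesis
    unfolding bounded_measurable_mat_def using C by auto
qed

lemma bounded_measurable_mat_mult:
  assumes A: "bounded_measurable_mat P d A" and B: "bounded_measurable_mat P d B"
  shows "bounded_measurable_mat P d (\<lambda>x. A x * B x)"
proof -
  obtain BA where BA: "\<And>x i j. i < d \<Longrightarrow> j < d \<Longrightarrow> cmod (A x $$ (i, j)) \<le> BA"
    using A unfolding bounded_measurable_mat_def by blast
  obtain BB where BB: "\<And>x i j. i < d \<Longrightarrow> j < d \<Longrightarrow> cmod (B x $$ (i, j)) \<le> BB"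
    using B unfolding bounded_measurable_mat_def by blast
  have A_carrier: "\<And>x. A x \<in> carrier_mat d d" and B_carrier: "\<And>x. B x \<in> carrier_mat d d"
    using A B unfolding bounded_measurable_mat_def by auto
  have entry: "(A x * B x) $$ (i, j) = (\<Sum>k<d. A x $$ (i, k) * B x $$ (k, j))" if "i < d" "j < d" for x i j
    using that A_carrier[of x] B_carrier[of x]
    by (auto simp: scalar_prod_def lessThan_atLeast0 intro!: sum.cong)
  have "(\<lambda>x. (A x * B x) $$ (i, j)) \<in> borel_measurable P" if "i < d" "j < d" for i j
  proof -
    have "(\<lambda>x. \<Sum>k<d. A x $$ (i, k) * B x $$ (k, j)) \<in> borel_measurable P"
      using A B that unfolding bounded_measurable_mat_def
      by (intro borel_measurable_sum borel_measurable_times) auto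
    then show ?thesis
      using entry[OF that] by simp
  qed
  moreover have "cmod ((A x * B x) $$ (i, j)) \<le> d * (BA * BB)" if "i < d" "j < d" for x i j
  proof -
    have "cmod ((A x * B x) $$ (i, j)) \<le> (\<Sum>k<d. cmod (A x $$ (i, k)) * cmod (B x $$ (k, j)))"
      unfolding entry[OF that] by (rule order_trans[OF norm_sum]) (simp add: norm_mult)
    also have "\<dots> \<le> (\<Sum>k<d. BA * BB)"
      by (rule sum_mono, rule mult_mono) (use that BA BB in \<open>auto intro: order_trans[OF norm_ge_zero]\<close>)
    finally show ?thesis
      by simp
  qed
  ultimately show ?thesis
    unfolding bounded_measurable_mat_def using A_carrier B_carrier by (auto intro!: exI[of _ "d * (BA * BB)"])
qed

lemma bounded_measurable_mat_adjoint:
  assumes A: "bounded_measurable_mat P d A"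
  shows "bounded_measurable_mat P d (\<lambda>x. mat_adjoint (A x))"
proof -
  have A_carrier: "\<And>x. A x \<in> carrier_mat d d"
    using A unfolding bounded_measurable_mat_def by auto
  obtain BA where BA: "\<And>x i j. i < d \<Longrightarrow> j < d \<Longrightarrow> cmod (A x $$ (i, j)) \<le> BA"
    using A unfolding bounded_measurable_mat_def by blast
  have entry: "mat_adjoint (A x) $$ (i, j) = cnj (A x $$ (j, i))" if "i < d" "j < d" for x i j
    using that A_carrier[of x] by simp
  have "(\<lambda>x. mat_adjoint (A x) $$ (i, j)) \<in> borel_measurable P" if "i < d" "j < d" for i j
  proof -
    have "(\<lambda>x. cnj (A x $$ (j, i))) \<in> borel_measurable P"
      using A that unfolding bounded_measurable_mat_def
      by (intro borel_measurable_continuous_on[where f = cnj]) (auto intro: continuous_intros)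
    then show ?thesis
      using entry[OF that] by simp
  qed
  moreover have "cmod (mat_adjoint (A x) $$ (i, j)) \<le> BA" if "i < d" "j < d" for x i j
    using entry[OF that] BA that by simp
  ultimately show ?thesis
    unfolding bounded_measurable_mat_def using A_carrier by (auto intro!: exI[of _ BA])
qed

lemma bounded_measurable_mat_on_qubit:
  assumes U: "bounded_measurable_mat P 2 U"
  shows "bounded_measurable_mat P (2 ^ n) (\<lambda>x. on_qubit n q (U x))"
proof -
  obtain BU where BU: "\<And>x i j. i < 2 \<Longrightarrow> j < 2 \<Longrightarrow> cmod (U x $$ (i, j)) \<le> BU"
    using U unfolding bounded_measurable_mat_def by blast
  have "0 \<le> BU"
    using BU[of 0 0 undefined] by (auto intro: order_trans[OF norm_ge_zero])
  then have "cmod (on_qubit n q (U x) $$ (i, j)) \<le> BU" if "i < 2 ^ n" "j < 2 ^ n" for x i j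
    using that BU by (auto simp: on_qubit_index qbit_less_2)
  moreover have "(\<lambda>x. on_qubit n q (U x) $$ (i, j)) \<in> borel_measurable P" if "i < 2 ^ n" "j < 2 ^ n" for i j
    using U that qbit_less_2[of n q i] qbit_less_2[of n q j] unfolding bounded_measurable_mat_def
    by (cases "agree_off n {q} i j") (auto simp: on_qubit_index)
  ultimately show ?thesis
    unfolding bounded_measurable_mat_def by auto
qed

lemma bounded_measurable_mat_rot:
  assumes p: "p \<in> I"
  shows "bounded_measurable_mat (PiM I (\<lambda>_. uniform_angle)) 2 (\<lambda>x. rot (x p))"
proof -
  have "continuous_on UNIV (\<lambda>t. rot t $$ (i, j))" if "i < 2" "j < 2" for i j
    using that by (auto simp: rot_mat2 mat2_def dest!: less_2_cases intro!: continuous_intros)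
  moreover have "cmod (rot t $$ (i, j)) \<le> 1" if "i < 2" "j < 2" for t i j
    using that by (auto simp: rot_mat2 mat2_def dest!: less_2_cases)
  ultimately show ?thesis
    unfolding bounded_measurable_mat_def using borel_measurable_PiM_uniform_angle_component[OF p]
    by simp blast
qed

lemma bounded_measurable_mat_prod_list:
  "(\<And>j. j \<in> set js \<Longrightarrow> bounded_measurable_mat P d (F j)) \<Longrightarrow>
    bounded_measurable_mat P d (\<lambda>x. mat_prod_list d (map (\<lambda>j. F j x) js))"
  by (induction js)
    (simp_all add: mat_prod_list_def bounded_measurable_mat_const bounded_measurable_mat_mult)

lemma bounded_measurable_mat_expect:
  assumes A: "bounded_measurable_mat P d A" and H: "H \<in> carrier_mat d d"
  shows "(\<lambda>x. expect H (A x)) \<in> borel_measurable P" "\<exists>B. \<forall>x. \<bar>expect H (A x)\<bar> \<le> B"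
proof -
  have OA: "bounded_measurable_mat P d (\<lambda>x. H * A x)"
    by (rule bounded_measurable_mat_mult[OF bounded_measurable_mat_const[OF H] A])
  then obtain B where B: "\<And>x i j. i < d \<Longrightarrow> j < d \<Longrightarrow> cmod ((H * A x) $$ (i, j)) \<le> B"
    unfolding bounded_measurable_mat_def by blast
  have trace: "expect H (A x) = Re (\<Sum>i<d. (H * A x) $$ (i, i))" for x
    using H A by (simp add: expect_def mat_trace_def bounded_measurable_mat_def)
  have "(\<lambda>x. \<Sum>i<d. (H * A x) $$ (i, i)) \<in> borel_measurable P"
    using OA unfolding bounded_measurable_mat_def by (intro borel_measurable_sum) auto
  then show "(\<lambda>x. expect H (A x)) \<in> borel_measurable P"
    unfolding trace by measurable
  have "\<bar>expect H (A x)\<bar> \<le> d * B" for x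
  proof -
    have "\<bar>expect H (A x)\<bar> \<le> cmod (\<Sum>i<d. (H * A x) $$ (i, i))"
      unfolding trace by (rule abs_Re_le_cmod)
    also have "\<dots> \<le> (\<Sum>i<d. cmod ((H * A x) $$ (i, i)))"
      by (rule norm_sum)
    also have "\<dots> \<le> (\<Sum>i<d. B)"
      by (rule sum_mono) (use B in auto)
    finally show ?thesis
      by simp
  qed
  then show "\<exists>B. \<forall>x. \<bar>expect H (A x)\<bar> \<le> B"
    by blast
qed

lemma finite_TT_params: "finite (TT_params n m)"
proof (rule finite_subset)
  show "TT_params n m \<subseteq> {1..m + 1} \<times> {1..n}"
    unfolding TT_params_def by (auto intro: order_trans[OF _ div_le_dividend])
qed auto

lemma first_rotation_in_TT_params:
  fixes m n k :: nat
  assumes "k \<le> m" "n = 2 ^ m"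
  shows "(Suc k, 1) \<in> TT_params n m"
proof -
  have "(2::nat) ^ k \<le> 2 ^ m"
    using assms by (intro power_increasing) auto
  then have "0 < n div 2 ^ k"
    using assms(2) by (simp add: div_greater_zero_iff)
  then show ?thesis
    using assms unfolding TT_params_def by auto
qed

lemma bounded_measurable_V_layer:
  "1 \<le> l \<Longrightarrow> l \<le> m + 1 \<Longrightarrow> bounded_measurable_mat (TT_param_measure n m) (2 ^ n) (V_layer n l)"
  unfolding TT_param_measure_def V_layer_def[abs_def]
  by (intro bounded_measurable_mat_prod_list bounded_measurable_mat_on_qubit bounded_measurable_mat_rot)
    (auto simp: TT_params_def)

lemma bounded_measurable_TT_partial:
  "k \<le> m + 1 \<Longrightarrow> bounded_measurable_mat (TT_param_measure n m) (2 ^ n) (TT_partial n k)"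
proof (induction k rule: induct_nat_012)
  case 0
  have "TT_partial n 0 = (\<lambda>_. 1\<^sub>m (2 ^ n))"
    by (rule ext) simp
  then show ?case
    by (simp add: bounded_measurable_mat_const)
next
  case 1
  have "TT_partial n (Suc 0) = V_layer n 1"
    by (rule ext) simp
  then show ?case
    by (simp add: bounded_measurable_V_layer)
next
  case (ge2 k)
  have "TT_partial n (Suc (Suc k)) =
      (\<lambda>\<theta>. V_layer n (k + 2) \<theta> * CX_layer n (k + 1) * TT_partial n (Suc k) \<theta>)"
    by (rule ext) simp
  then show ?case
    using ge2 by (simp add: bounded_measurable_mat_mult bounded_measurable_mat_const bounded_measurable_V_layer)
qed

lemma bounded_measurable_TT_state_CX:
  assumes "k \<le> m" "\<rho> \<in> carrier_mat (2 ^ n) (2 ^ n)"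
  shows "bounded_measurable_mat (TT_param_measure n m) (2 ^ n) (TT_state_CX n \<rho> k)"
  unfolding TT_state_CX_def[abs_def] TT_state_def using assms
  by (cases "k = 0")
    (simp_all add: bounded_measurable_mat_const bounded_measurable_mat_mult bounded_measurable_mat_adjoint
      bounded_measurable_TT_partial)

section \<open>The variance bound\<close>

lemma TT_partial_cong:
  "(\<And>l j. l \<le> k \<Longrightarrow> \<theta>' (l, j) = \<theta> (l, j)) \<Longrightarrow> TT_partial n k \<theta>' = TT_partial n k \<theta>"
proof (induction n k \<theta> rule: TT_partial.induct)
  case (1 n \<theta>)
  then show ?case by simp
next
  case (2 n \<theta>)
  then show ?case
    unfolding TT_partial.simps V_layer_def by (intro arg_cong[where f = "mat_prod_list (2 ^ n)"] map_cong) auto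
next
  case (3 n k \<theta>)
  have "V_layer n (k + 2) \<theta>' = V_layer n (k + 2) \<theta>"
    unfolding V_layer_def using "3.prems" by (intro arg_cong[where f = "mat_prod_list (2 ^ n)"] map_cong) auto
  moreover have "TT_partial n (Suc k) \<theta>' = TT_partial n (Suc k) \<theta>"
    using "3.prems" by (intro "3.IH") auto
  ultimately show ?case
    by simp
qed

lemma TT_state_CX_fun_upd_later:
  assumes "k < l"
  shows "TT_state_CX n \<rho> k (\<theta>((l, j) := t)) = TT_state_CX n \<rho> k \<theta>"
proof -
  have "TT_partial n k (\<theta>((l, j) := t)) = TT_partial n k \<theta>"
    using assms by (intro TT_partial_cong) auto
  then show ?thesis
    by (simp add: TT_state_CX_def TT_state_def)
qed

lemma integral_expect_TT_state_Suc_square: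
  fixes k m n :: nat
  assumes k: "k \<le> m" and n: "n = 2 ^ m" and \<rho>: "\<rho> \<in> carrier_mat (2 ^ n) (2 ^ n)"
  defines "X \<equiv> on_qubit n 1 (pauli 1)" and "Z \<equiv> on_qubit n 1 (pauli 3)" and "M \<equiv> TT_param_measure n m"
  defines "moment \<equiv> (\<integral>\<theta>. (expect X (TT_state_CX n \<rho> k \<theta>))\<^sup>2 \<partial>M) + (\<integral>\<theta>. (expect Z (TT_state_CX n \<rho> k \<theta>))\<^sup>2 \<partial>M)"
  shows "(\<integral>\<theta>. (expect X (TT_state n \<rho> (Suc k) \<theta>))\<^sup>2 \<partial>M) = moment / 2"
    and "(\<integral>\<theta>. (expect Z (TT_state n \<rho> (Suc k) \<theta>))\<^sup>2 \<partial>M) = moment / 2"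
proof -
  have S: "bounded_measurable_mat M (2 ^ n) (TT_state_CX n \<rho> k)"
    unfolding M_def by (rule bounded_measurable_TT_state_CX[OF k \<rho>])
  have XZ: "X \<in> carrier_mat (2 ^ n) (2 ^ n)" "Z \<in> carrier_mat (2 ^ n) (2 ^ n)"
    by (simp_all add: X_def Z_def)
  obtain BX where BX: "\<And>\<theta>. \<bar>expect X (TT_state_CX n \<rho> k \<theta>)\<bar> \<le> BX"
    using bounded_measurable_mat_expect(2)[OF S XZ(1)] by blast
  obtain BZ where BZ: "\<And>\<theta>. \<bar>expect Z (TT_state_CX n \<rho> k \<theta>)\<bar> \<le> BZ"
    using bounded_measurable_mat_expect(2)[OF S XZ(2)] by blast
  note meas = bounded_measurable_mat_expect(1)[OF S XZ(1)] bounded_measurable_mat_expect(1)[OF S XZ(2)]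
  note rotation = integral_rotation_square[OF finite_TT_params first_rotation_in_TT_params[OF k n],
      folded TT_param_measure_def M_def]
  have indep: "TT_state_CX n \<rho> k (\<theta>((Suc k, 1) := t)) = TT_state_CX n \<rho> k \<theta>" for \<theta> t
    by (rule TT_state_CX_fun_upd_later) simp
  show "(\<integral>\<theta>. (expect X (TT_state n \<rho> (Suc k) \<theta>))\<^sup>2 \<partial>M) = moment / 2"
    unfolding expect_TT_state_Suc(1)[OF k n \<rho>, folded X_def Z_def] moment_def
    by (rule rotation[OF meas(1) BX meas(2) BZ]) (simp_all add: indep)
  have "(\<integral>\<theta>. (expect Z (TT_state n \<rho> (Suc k) \<theta>))\<^sup>2 \<partial>M) =
      (\<integral>\<theta>. (cos (2 * \<theta> (Suc k, 1)) * expect Z (TT_state_CX n \<rho> k \<theta>)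
        + sin (2 * \<theta> (Suc k, 1)) * - expect X (TT_state_CX n \<rho> k \<theta>))\<^sup>2 \<partial>M)"
    unfolding expect_TT_state_Suc(2)[OF k n \<rho>, folded X_def Z_def] by simp
  also have "\<dots> = ((\<integral>\<theta>. (expect Z (TT_state_CX n \<rho> k \<theta>))\<^sup>2 \<partial>M) + (\<integral>\<theta>. (- expect X (TT_state_CX n \<rho> k \<theta>))\<^sup>2 \<partial>M)) / 2"
    by (rule rotation[OF meas(2) BZ]) (use meas(1) BX in \<open>simp_all add: indep\<close>)
  finally show "(\<integral>\<theta>. (expect Z (TT_state n \<rho> (Suc k) \<theta>))\<^sup>2 \<partial>M) = moment / 2"
    by (simp add: moment_def)
qed

lemma TT_moment_lower_bound:
  fixes k m n :: nat
  assumes k: "k \<le> m" and n: "n = 2 ^ m" and \<rho>: "\<rho> \<in> carrier_mat (2 ^ n) (2 ^ n)"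
  defines "X \<equiv> on_qubit n 1 (pauli 1)" and "Z \<equiv> on_qubit n 1 (pauli 3)" and "M \<equiv> TT_param_measure n m"
  shows "((expect X \<rho>)\<^sup>2 + (expect Z \<rho>)\<^sup>2) / 2 ^ k \<le>
    (\<integral>\<theta>. (expect X (TT_state_CX n \<rho> k \<theta>))\<^sup>2 \<partial>M) + (\<integral>\<theta>. (expect Z (TT_state_CX n \<rho> k \<theta>))\<^sup>2 \<partial>M)"
  using k
proof (induction k)
  case 0
  interpret prob_space M
    unfolding M_def TT_param_measure_def by (rule prob_space_PiM_uniform_angle)
  show ?case
    by (simp add: TT_state_CX_def prob_space)
next
  case (Suc k)
  note moment = integral_expect_TT_state_Suc_square[OF _ n \<rho>, folded X_def Z_def M_def]
  have "((expect X \<rho>)\<^sup>2 + (expect Z \<rho>)\<^sup>2) / 2 ^ Suc k = ((expect X \<rho>)\<^sup>2 + (expect Z \<rho>)\<^sup>2) / 2 ^ k / 2"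
    by (simp only: power_Suc2 divide_divide_eq_left)
  also have "\<dots> \<le>
      ((\<integral>\<theta>. (expect X (TT_state_CX n \<rho> k \<theta>))\<^sup>2 \<partial>M) + (\<integral>\<theta>. (expect Z (TT_state_CX n \<rho> k \<theta>))\<^sup>2 \<partial>M)) / 2"
    using Suc by (intro divide_right_mono) simp_all
  also have "\<dots> = (\<integral>\<theta>. (expect X (TT_state n \<rho> (Suc k) \<theta>))\<^sup>2 \<partial>M)"
    using moment(1)[of k] Suc.prems by simp
  also have "\<dots> = (\<integral>\<theta>. (expect X (TT_state_CX n \<rho> (Suc k) \<theta>))\<^sup>2 \<partial>M)"
    unfolding X_def using expect_pauli_1_TT_state_CX[OF _ Suc.prems n \<rho>] by simp
  also have "\<dots> \<le> (\<integral>\<theta>. (expect X (TT_state_CX n \<rho> (Suc k) \<theta>))\<^sup>2 \<partial>M)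
      + (\<integral>\<theta>. (expect Z (TT_state_CX n \<rho> (Suc k) \<theta>))\<^sup>2 \<partial>M)"
    by (simp add: integral_nonneg)
  finally show ?case .
qed

theorem lemma7:
  fixes m n :: nat and \<rho> :: "complex mat"
  assumes "m \<ge> 1" and "n = 2 ^ m" and "density_matrix n \<rho>"
  shows "(\<integral>\<theta>. (f_TT n m \<rho> \<theta> - 1/2)\<^sup>2 \<partial>TT_param_measure n m) \<ge>
    ((Re (mat_trace (on_qubit n 1 (pauli 1) * \<rho>)))\<^sup>2 + (Re (mat_trace (on_qubit n 1 (pauli 3) * \<rho>)))\<^sup>2)
      / (8 * real n)"
proof -
  have \<rho>: "\<rho> \<in> carrier_mat (2 ^ n) (2 ^ n)"
    using assms(3) unfolding density_matrix_def by simp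
  let ?M = "TT_param_measure n m" and ?X = "on_qubit n 1 (pauli 1)" and ?Z = "on_qubit n 1 (pauli 3)"
  have "((Re (mat_trace (?X * \<rho>)))\<^sup>2 + (Re (mat_trace (?Z * \<rho>)))\<^sup>2) / (8 * real n) =
      ((expect ?X \<rho>)\<^sup>2 + (expect ?Z \<rho>)\<^sup>2) / 2 ^ m / 8"
    by (simp add: expect_def assms(2))
  also have "\<dots> \<le> ((\<integral>\<theta>. (expect ?X (TT_state_CX n \<rho> m \<theta>))\<^sup>2 \<partial>?M)
      + (\<integral>\<theta>. (expect ?Z (TT_state_CX n \<rho> m \<theta>))\<^sup>2 \<partial>?M)) / 8"
    using TT_moment_lower_bound[OF order.refl assms(2) \<rho>] by (intro divide_right_mono) simp_all
  also have "\<dots> = (\<integral>\<theta>. (expect ?Z (TT_state n \<rho> (Suc m) \<theta>))\<^sup>2 \<partial>?M) / 4"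
    using integral_expect_TT_state_Suc_square(2)[OF order.refl assms(2) \<rho>] by simp
  also have "\<dots> = (\<integral>\<theta>. (f_TT n m \<rho> \<theta> - 1/2)\<^sup>2 \<partial>?M)"
    by (simp add: f_TT_eq_expect[OF \<rho>] power_divide)
  finally show ?thesis .
qed

end
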